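(* We have $h_s(2) = 6$ and $h_s(3) = 12$.
   Context: A real matrix is called totally $1$-submodular if every square submatrix (of every size) has determinant of absolute value at most $1$. For $t \in \mathbb{R}^m$ and $A\in\mathbb{R}^{m\times n}$ with columns $A_1,\dots,A_n$, $t+A$ denotes the matrix with columns $t+A_1,\dots,t+A_n$. The shifted Heller constant $h_s(m)$ is the maximum $n$ such that there exist a vector $t \in [0,1)^m\setminus\{\mathbf 0\}$ and a matrix $A \in \{-1,0,1\}^{m\times n}$ with pairwise distinct columns such that $t+A$ is totally $1$-submodular. *)

theory Defs
  imports "Jordan_Normal_Form.Determinant" "Jordan_Normal_Form.DL_Submatrix"
begin

definition totally_1_submodular :: "real mat \<Rightarrow> bool" where
  "totally_1_submodular M \<longleftrightarrow>
     (\<forall>I J. I \<subseteq> {..<dim_row M} \<longrightarrow> J \<subseteq> {..<dim_col M} \<longrightarrow> card I = card J \<longrightarrow>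
        \<bar>det (submatrix M I J)\<bar> \<le> 1)"

definition shift_mat :: "real vec \<Rightarrow> int mat \<Rightarrow> real mat" where
  "shift_mat t A = mat (dim_row A) (dim_col A) (\<lambda>(i,j). t $ i + real_of_int (A $$ (i,j)))"

definition shifted_admissible :: "nat \<Rightarrow> nat \<Rightarrow> bool" where
  "shifted_admissible m n \<longleftrightarrow>
     (\<exists>(t :: real vec) (A :: int mat).
        t \<in> carrier_vec m \<and> (\<forall>i<m. 0 \<le> t $ i \<and> t $ i < 1) \<and> t \<noteq> 0\<^sub>v m \<and>
        A \<in> carrier_mat m n \<and> (\<forall>i<m. \<forall>j<n. A $$ (i,j) \<in> {-1, 0, 1}) \<and>
        (\<forall>j<n. \<forall>j'<n. j \<noteq> j' \<longrightarrow> col A j \<noteq> col A j') \<and>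
        totally_1_submodular (shift_mat t A))"

definition shifted_heller :: "nat \<Rightarrow> nat" where
  "shifted_heller m = (GREATEST n. shifted_admissible m n)"

end

theory Submission
  imports Defs
begin

(*
  A positive shift t_i forces row i of A into {-1, 0}, because |t_i + 1| > 1. With distinct
  columns this gives n <= 2 * 3 for m = 2, and n <= 2 * 2 * 3 for m = 3 unless exactly one row r
  is shifted. In that case the columns split into the layers A_r = 0 and A_r = -1. On a layer,
  row r of t + A is a constant p (namely t_r or t_r - 1) and the other two rows are integral,
  so each column is a point of {-1, 0, 1}^2. The 2 x 2 minors in the integral rows forbid corners
  on both diagonals of the square, which leaves at most 7 points; the minors through row r are
  p times differences of coordinates resp. twice the area of a lattice triangle, which leaves
  at most 4 points if |p| > 1/2 and at most 6 if |p| = 1/2. As max (t_r, 1 - t_r) >= 1/2, the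
  two layers contain at most 12 columns together.
  The bounds are attained by t = (1/2, 0) with the columns {-1, 0} x {-1, 0, 1}, and by
  t = (1/2, 1/2, 0) with the columns {-1, 0}^2 x {-1, 0, 1}.
*)

section \<open>Minors\<close>

definition minor :: "'a :: comm_ring_1 mat \<Rightarrow> nat list \<Rightarrow> nat list \<Rightarrow> 'a" where
  "minor M rs cs = det (mat (length rs) (length cs) (\<lambda>(a, b). M $$ (rs ! a, cs ! b)))"

lemma det_mat_2:
  "det (mat 2 2 f) = (f (0, 0) * f (1, 1) - f (0, 1) * f (1, 0) :: 'a :: comm_ring_1)"
  by (subst laplace_expansion_column[of _ 2 0])
    (auto simp: cofactor_def mat_delete_def numeral_2_eq_2 lessThan_Suc det_single)

lemma minor_1: "minor M [i] [j] = M $$ (i, j)"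
  by (simp add: minor_def det_single)

lemma minor_2: "minor M [i1, i2] [j1, j2] = M $$ (i1, j1) * M $$ (i2, j2) - M $$ (i1, j2) * M $$ (i2, j1)"
  by (simp add: minor_def det_mat_2[unfolded numeral_2_eq_2])

lemma minor_3:
  "minor M [i1, i2, i3] [j1, j2, j3] =
     M $$ (i1, j1) * (M $$ (i2, j2) * M $$ (i3, j3) - M $$ (i2, j3) * M $$ (i3, j2))
   - M $$ (i2, j1) * (M $$ (i1, j2) * M $$ (i3, j3) - M $$ (i1, j3) * M $$ (i3, j2))
   + M $$ (i3, j1) * (M $$ (i1, j2) * M $$ (i2, j3) - M $$ (i1, j3) * M $$ (i2, j2))"
  unfolding minor_def
  by (subst laplace_expansion_column[of _ 3 0])
    (auto simp: cofactor_def mat_delete_def numeral_3_eq_3 lessThan_Suc det_mat_2[unfolded numeral_2_eq_2] algebra_simps)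

lemma pick_sorted_nth:
  assumes sorted: "sorted_wrt (<) xs" and k: "k < length xs"
  shows "pick (set xs) k = xs ! k"
proof -
  have le_iff: "xs ! i \<le> xs ! j \<longleftrightarrow> i \<le> j" if "i < length xs" "j < length xs" for i j
    using sorted_wrt_nth_less[OF sorted] that by (metis leD le_less linorder_neqE_nat)
  show ?thesis
    using k
  proof (induction k)
    case 0
    show ?case
      unfolding pick.simps
    proof (rule Least_equality)
      show "xs ! 0 \<in> set xs"
        using 0 by simp
      show "xs ! 0 \<le> y" if "y \<in> set xs" for y
        using that 0 le_iff by (auto simp: in_set_conv_nth)
    qed
  next
    case (Suc k)
    show ?case
      unfolding pick.simps Suc.IH[OF Suc_lessD[OF Suc.prems]]
    proof (rule Least_equality)
      show "xs ! Suc k \<in> set xs \<and> xs ! k < xs ! Suc k"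
        using Suc.prems sorted_wrt_nth_less[OF sorted] by simp
      show "xs ! Suc k \<le> y" if "y \<in> set xs \<and> xs ! k < y" for y
        using that Suc.prems le_iff by (auto simp: in_set_conv_nth not_le[symmetric])
    qed
  qed
qed

lemma det_submatrix_sorted:
  assumes "sorted_wrt (<) rs" "sorted_wrt (<) cs"
    and "set rs \<subseteq> {..<dim_row M}" "set cs \<subseteq> {..<dim_col M}"
  shows "det (submatrix M (set rs) (set cs)) = minor M rs cs"
proof -
  have "{i. i < dim_row M \<and> i \<in> set rs} = set rs" "{j. j < dim_col M \<and> j \<in> set cs} = set cs"
    using assms(3,4) by auto
  moreover have "card (set rs) = length rs" "card (set cs) = length cs"
    using assms(1,2) by (simp_all add: strict_sorted_iff distinct_card)
  ultimately have "submatrix M (set rs) (set cs) = mat (length rs) (length cs) (\<lambda>(a, b). M $$ (rs ! a, cs ! b))"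
    unfolding submatrix_def by (intro cong_mat) (simp_all add: pick_sorted_nth assms(1,2))
  then show ?thesis
    by (simp add: minor_def)
qed

lemma totally_1_submodular_iff_minors:
  "totally_1_submodular M \<longleftrightarrow>
     (\<forall>rs cs. sorted_wrt (<) rs \<longrightarrow> sorted_wrt (<) cs \<longrightarrow>
        set rs \<subseteq> {..<dim_row M} \<longrightarrow> set cs \<subseteq> {..<dim_col M} \<longrightarrow>
        length rs = length cs \<longrightarrow> \<bar>minor M rs cs\<bar> \<le> 1)"
  (is "_ \<longleftrightarrow> ?minors")
proof
  assume T: "totally_1_submodular M"
  show ?minors
  proof (intro allI impI)
    fix rs cs :: "nat list"
    assume rs: "sorted_wrt (<) rs" "set rs \<subseteq> {..<dim_row M}"
      and cs: "sorted_wrt (<) cs" "set cs \<subseteq> {..<dim_col M}"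
      and "length rs = length cs"
    then have "card (set rs) = card (set cs)"
      by (simp add: strict_sorted_iff distinct_card)
    then have "\<bar>det (submatrix M (set rs) (set cs))\<bar> \<le> 1"
      using T rs cs unfolding totally_1_submodular_def by blast
    then show "\<bar>minor M rs cs\<bar> \<le> 1"
      using det_submatrix_sorted rs cs by metis
  qed
next
  assume minors: ?minors
  show "totally_1_submodular M"
    unfolding totally_1_submodular_def
  proof (intro allI impI)
    fix I J
    assume I: "I \<subseteq> {..<dim_row M}" and J: "J \<subseteq> {..<dim_col M}" and "card I = card J"
    have fin: "finite I" "finite J"
      using I J finite_subset by blast+
    let ?rs = "sorted_list_of_set I" and ?cs = "sorted_list_of_set J"
    have "\<bar>minor M ?rs ?cs\<bar> \<le> 1"
      using minors fin I J \<open>card I = card J\<close> by simp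
    then show "\<bar>det (submatrix M I J)\<bar> \<le> 1"
      using det_submatrix_sorted[of ?rs ?cs M] fin I J by simp
  qed
qed

lemma det_permute_rows_cols:
  assumes A: "A \<in> carrier_mat n n" and p: "p permutes {..<n}" and q: "q permutes {..<n}"
  shows "det (mat n n (\<lambda>(i, j). A $$ (p i, q j))) = signof p * signof q * det A"
proof -
  define B where "B = mat n n (\<lambda>(i, j). A $$ (i, q j))"
  have B: "B \<in> carrier_mat n n"
    by (simp add: B_def)
  have p_less: "p i < n" and q_less: "q i < n" if "i < n" for i
    using that permutes_in_image[OF p] permutes_in_image[OF q] by auto
  have "mat n n (\<lambda>(i, j). A $$ (p i, q j)) = mat n n (\<lambda>(i, j). B $$ (p i, j))"
    by (intro cong_mat) (simp_all add: B_def p_less)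
  then have "det (mat n n (\<lambda>(i, j). A $$ (p i, q j))) = signof p * det B"
    using det_permute_rows[OF B] p by (simp add: lessThan_atLeast0)
  moreover have "transpose_mat B = mat n n (\<lambda>(i, j). transpose_mat A $$ (q i, j))"
    using A by (intro eq_matI) (simp_all add: B_def q_less)
  then have "det B = signof q * det A"
    using det_permute_rows[of "transpose_mat A" n q] det_transpose[OF B] det_transpose[OF A] A q
    by (simp add: lessThan_atLeast0)
  ultimately show ?thesis
    by simp
qed

lemma minor_permute_list:
  assumes p: "p permutes {..<length rs}" and q: "q permutes {..<length cs}"
    and len: "length rs = length cs"
  shows "minor M (permute_list p rs) (permute_list q cs) = signof p * signof q * minor M rs cs"
proof -
  let ?k = "length rs"
  define B where "B = mat ?k ?k (\<lambda>(a, b). M $$ (rs ! a, cs ! b))"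
  have "p a < ?k" "q a < ?k" if "a < ?k" for a
    using that len permutes_in_image[OF p] permutes_in_image[OF q] by auto
  then have "mat ?k ?k (\<lambda>(a, b). M $$ (permute_list p rs ! a, permute_list q cs ! b))
      = mat ?k ?k (\<lambda>(a, b). B $$ (p a, q b))"
    using p q len by (intro cong_mat) (simp_all add: B_def permute_list_nth)
  then have "minor M (permute_list p rs) (permute_list q cs) = det (mat ?k ?k (\<lambda>(a, b). B $$ (p a, q b)))"
    by (simp add: minor_def len)
  also have "\<dots> = signof p * signof q * det B"
    using det_permute_rows_cols[of B ?k p q] p q len by (simp add: B_def)
  finally show ?thesis
    by (simp add: minor_def B_def len)
qed

lemma minor_eq_0_if_not_distinct:
  assumes "\<not> distinct cs" and "length rs = length cs"
  shows "minor M rs cs = 0"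
proof -
  obtain a b where ab: "a < length cs" "b < length cs" "a \<noteq> b" "cs ! a = cs ! b"
    using assms(1) by (auto simp: distinct_conv_nth)
  show ?thesis
    unfolding minor_def using ab assms(2)
    by (intro det_identical_columns[of _ "length cs" a b]) auto
qed

lemma totally_1_submodular_minor_le:
  assumes T: "totally_1_submodular M" and "distinct rs"
    and rs: "set rs \<subseteq> {..<dim_row M}" and cs: "set cs \<subseteq> {..<dim_col M}"
    and len: "length rs = length cs"
  shows "\<bar>minor M rs cs\<bar> \<le> 1"
proof (cases "distinct cs")
  case False
  then show ?thesis
    using minor_eq_0_if_not_distinct[OF False len, of M] by simp
next
  case True
  let ?rs = "sorted_list_of_set (set rs)" and ?cs = "sorted_list_of_set (set cs)"
  have "mset rs = mset ?rs" "mset cs = mset ?cs"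
    using \<open>distinct rs\<close> True by (simp_all add: sorted_list_of_set_sort_remdups distinct_remdups_id)
  then obtain p q where p: "p permutes {..<length ?rs}" "permute_list p ?rs = rs"
    and q: "q permutes {..<length ?cs}" "permute_list q ?cs = cs"
    by (metis mset_eq_permutation)
  have len': "length ?rs = length ?cs"
    using \<open>mset rs = mset ?rs\<close> \<open>mset cs = mset ?cs\<close> len by (metis mset_eq_length)
  have "minor M rs cs = signof p * signof q * minor M ?rs ?cs"
    using minor_permute_list[OF p(1) q(1) len'] p(2) q(2) by simp
  moreover have "\<bar>minor M ?rs ?cs\<bar> \<le> 1"
    using T rs cs len' unfolding totally_1_submodular_iff_minors by auto
  ultimately show ?thesis
    by (auto simp: abs_mult sign_def)
qed

section \<open>Lattice points in the square \<open>{-1, 0, 1}\<^sup>2\<close>\<close>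

definition cross :: "int \<times> int \<Rightarrow> int \<times> int \<Rightarrow> int" where
  "cross v w = fst v * snd w - snd v * fst w"

definition double_area :: "int \<times> int \<Rightarrow> int \<times> int \<Rightarrow> int \<times> int \<Rightarrow> int" where
  "double_area u v w = (fst v - fst u) * (snd w - snd u) - (snd v - snd u) * (fst w - fst u)"

lemma card_add_card_disjoint_le_9:
  fixes S D :: "(int \<times> int) set"
  assumes "S \<subseteq> {-1, 0, 1} \<times> {-1, 0, 1}" "D \<subseteq> {-1, 0, 1} \<times> {-1, 0, 1}" "S \<inter> D = {}"
  shows "card S + card D \<le> 9"
proof -
  have fin: "finite S" "finite D"
    using assms(1,2) by (auto intro: finite_subset)
  have "card S + card D = card (S \<union> D)"
    using fin assms(3) by (simp add: card_Un_disjoint)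
  also have "\<dots> \<le> card ({-1, 0, 1 :: int} \<times> {-1, 0, 1 :: int})"
    using assms(1,2) by (intro card_mono) (simp_all add: finite_cartesian_product)
  finally show ?thesis
    by (simp add: card_cartesian_product)
qed

text \<open>Corners on different diagonals have cross product \<open>\<plusminus>2\<close>.\<close>
lemma diagonal_or_antidiagonal_free:
  assumes "S \<subseteq> {-1, 0, 1} \<times> {-1, 0, 1}" and "\<forall>v\<in>S. \<forall>w\<in>S. \<bar>cross v w\<bar> \<le> 1"
  shows "S \<inter> {(1, 1), (-1, -1)} = {} \<or> S \<inter> {(1, -1), (-1, 1)} = {}"
  using assms(2) by (fastforce simp: cross_def)

lemma card_le_7_if_cross_le_1:
  assumes "S \<subseteq> {-1, 0, 1} \<times> {-1, 0, 1}" and "\<forall>v\<in>S. \<forall>w\<in>S. \<bar>cross v w\<bar> \<le> 1"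
  shows "card S \<le> 7"
  using diagonal_or_antidiagonal_free[OF assms]
    card_add_card_disjoint_le_9[OF assms(1), of "{(1, 1), (-1, -1)}"]
    card_add_card_disjoint_le_9[OF assms(1), of "{(1, -1), (-1, 1)}"]
  by auto

lemma card_le_2_if_diff_le_1:
  assumes "X \<subseteq> {-1, 0, 1 :: int}" and "\<forall>x\<in>X. \<forall>y\<in>X. \<bar>x - y\<bar> \<le> 1"
  shows "card X \<le> 2"
proof -
  have "X \<subseteq> {0, 1} \<or> X \<subseteq> {-1, 0}"
  proof (cases "1 \<in> X")
    case True
    then have "-1 \<notin> X"
      using assms(2) by fastforce
    then show ?thesis
      using assms(1) by auto
  next
    case False
    then show ?thesis
      using assms(1) by auto
  qed
  then show ?thesis
    by (auto dest: card_mono[rotated])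
qed

lemma card_le_4_if_diff_le_1:
  fixes S :: "(int \<times> int) set"
  assumes "S \<subseteq> {-1, 0, 1} \<times> {-1, 0, 1}"
    and "\<forall>v\<in>S. \<forall>w\<in>S. \<bar>fst v - fst w\<bar> \<le> 1 \<and> \<bar>snd v - snd w\<bar> \<le> 1"
  shows "card S \<le> 4"
proof -
  have "card (fst ` S) \<le> 2"
    by (rule card_le_2_if_diff_le_1) (use assms in force)+
  moreover have "card (snd ` S) \<le> 2"
    by (rule card_le_2_if_diff_le_1) (use assms in force)+
  moreover have "S \<subseteq> fst ` S \<times> snd ` S"
    by force
  then have "card S \<le> card (fst ` S \<times> snd ` S)"
    using assms(1) by (intro card_mono) (auto intro: finite_subset)
  ultimately show ?thesis
    using mult_le_mono[of "card (fst ` S)" 2 "card (snd ` S)" 2] by (simp add: card_cartesian_product)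
qed

lemma card_le_6_if_cross_le_1_area_le_2:
  assumes S: "S \<subseteq> {-1, 0, 1} \<times> {-1, 0, 1}" and cross: "\<forall>v\<in>S. \<forall>w\<in>S. \<bar>cross v w\<bar> \<le> 1"
    and area: "\<forall>u\<in>S. \<forall>v\<in>S. \<forall>w\<in>S. \<bar>double_area u v w\<bar> \<le> 2"
  shows "card S \<le> 6"
proof -
  have triangle: "\<exists>x\<in>{u, v, w}. x \<notin> S" if "\<bar>double_area u v w\<bar> = 3" for u v w
    using area that by fastforce
  consider "S \<inter> {(1, 1), (-1, -1)} = {}" | "S \<inter> {(1, -1), (-1, 1)} = {}"
    using diagonal_or_antidiagonal_free[OF S cross] by blast
  then show ?thesis
  proof cases
    case 1
    obtain x where "x \<in> {(1, 0), (0, -1), (-1, 1)}" "x \<notin> S"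
      using triangle[of "(1, 0)" "(0, -1)" "(-1, 1)"] by (auto simp: double_area_def)
    then show ?thesis
      using 1 card_add_card_disjoint_le_9[OF S, of "{(1, 1), (-1, -1), x}"] by auto
  next
    case 2
    obtain x where "x \<in> {(1, 0), (0, 1), (-1, -1)}" "x \<notin> S"
      using triangle[of "(1, 0)" "(0, 1)" "(-1, -1)"] by (auto simp: double_area_def)
    then show ?thesis
      using 2 card_add_card_disjoint_le_9[OF S, of "{(1, -1), (-1, 1), x}"] by auto
  qed
qed

lemma abs_less_if_abs_mult_le_1:
  fixes p x k :: real
  assumes "\<bar>p * x\<bar> \<le> 1" and "1 < \<bar>p\<bar> * k"
  shows "\<bar>x\<bar> < k"
proof (rule ccontr)
  assume "\<not> \<bar>x\<bar> < k"
  then have "\<bar>p\<bar> * k \<le> \<bar>p\<bar> * \<bar>x\<bar>"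
    by (intro mult_left_mono) auto
  then show False
    using assms by (simp add: abs_mult)
qed

lemma card_lattice_layer_le:
  fixes S :: "(int \<times> int) set" and p :: real
  assumes S: "S \<subseteq> {-1, 0, 1} \<times> {-1, 0, 1}" and cross: "\<forall>v\<in>S. \<forall>w\<in>S. \<bar>cross v w\<bar> \<le> 1"
    and area: "\<forall>u\<in>S. \<forall>v\<in>S. \<forall>w\<in>S. \<bar>p * of_int (double_area u v w)\<bar> \<le> 1"
    and diff: "\<forall>v\<in>S. \<forall>w\<in>S. \<bar>p * of_int (fst v - fst w)\<bar> \<le> 1 \<and> \<bar>p * of_int (snd v - snd w)\<bar> \<le> 1"
  shows "card S \<le> 7" and "1/2 \<le> \<bar>p\<bar> \<Longrightarrow> card S \<le> 6" and "1/2 < \<bar>p\<bar> \<Longrightarrow> card S \<le> 4"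
proof -
  show "card S \<le> 7"
    using S cross by (rule card_le_7_if_cross_le_1)
  show "card S \<le> 6" if p: "1/2 \<le> \<bar>p\<bar>"
  proof (rule card_le_6_if_cross_le_1_area_le_2[OF S cross], intro ballI)
    fix u v w
    assume "u \<in> S" "v \<in> S" "w \<in> S"
    then have "\<bar>of_int (double_area u v w)\<bar> < (3 :: real)"
      using area p by (intro abs_less_if_abs_mult_le_1) auto
    then show "\<bar>double_area u v w\<bar> \<le> 2"
      by linarith
  qed
  show "card S \<le> 4" if p: "1/2 < \<bar>p\<bar>"
  proof (rule card_le_4_if_diff_le_1[OF S], intro ballI)
    fix v w
    assume "v \<in> S" "w \<in> S"
    then have "\<bar>of_int (fst v - fst w)\<bar> < (2 :: real)" "\<bar>of_int (snd v - snd w)\<bar> < (2 :: real)"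
      using diff p by (auto intro!: abs_less_if_abs_mult_le_1)
    then show "\<bar>fst v - fst w\<bar> \<le> 1 \<and> \<bar>snd v - snd w\<bar> \<le> 1"
      by linarith
  qed
qed

lemma card_layer_le:
  fixes M :: "real mat" and g :: "nat \<Rightarrow> int \<times> int"
  assumes T: "totally_1_submodular M"
    and rows: "distinct [r, i, i']" "{r, i, i'} \<subseteq> {..<dim_row M}"
    and J: "J \<subseteq> {..<dim_col M}" "inj_on g J" "g ` J \<subseteq> {-1, 0, 1} \<times> {-1, 0, 1}"
    and entries: "\<And>j. j \<in> J \<Longrightarrow>
      M $$ (r, j) = p \<and> M $$ (i, j) = of_int (fst (g j)) \<and> M $$ (i', j) = of_int (snd (g j))"
  shows "card J \<le> 7" and "1/2 \<le> \<bar>p\<bar> \<Longrightarrow> card J \<le> 6" and "1/2 < \<bar>p\<bar> \<Longrightarrow> card J \<le> 4"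
proof -
  have minor_le: "\<bar>minor M rs cs\<bar> \<le> 1"
    if "distinct rs" "set rs \<subseteq> {r, i, i'}" "set cs \<subseteq> J" "length rs = length cs" for rs cs
    using totally_1_submodular_minor_le[OF T] that rows J(1) by blast
  have cross: "\<bar>cross (g j) (g k)\<bar> \<le> 1" if "j \<in> J" "k \<in> J" for j k
  proof -
    have "minor M [i, i'] [j, k] = of_int (cross (g j) (g k))"
      using that by (simp add: minor_2 entries cross_def)
    then show ?thesis
      using minor_le[of "[i, i']" "[j, k]"] that rows(1) by simp
  qed
  have area: "\<bar>p * of_int (double_area (g j1) (g j2) (g j3))\<bar> \<le> 1"
    if "j1 \<in> J" "j2 \<in> J" "j3 \<in> J" for j1 j2 j3
  proof -
    have "minor M [r, i, i'] [j1, j2, j3] = p * of_int (double_area (g j1) (g j2) (g j3))"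
      using that by (simp add: minor_3 entries double_area_def algebra_simps)
    then show ?thesis
      using minor_le[of "[r, i, i']" "[j1, j2, j3]"] that rows(1) by simp
  qed
  have diff: "\<bar>p * of_int (fst (g j) - fst (g k))\<bar> \<le> 1 \<and> \<bar>p * of_int (snd (g j) - snd (g k))\<bar> \<le> 1"
    if "j \<in> J" "k \<in> J" for j k
  proof -
    have "minor M [r, i] [k, j] = p * of_int (fst (g j) - fst (g k))"
      "minor M [r, i'] [k, j] = p * of_int (snd (g j) - snd (g k))"
      using that by (simp_all add: minor_2 entries algebra_simps)
    then show ?thesis
      using minor_le[of "[r, i]" "[k, j]"] minor_le[of "[r, i']" "[k, j]"] that rows(1) by simp
  qed
  have "\<forall>v\<in>g ` J. \<forall>w\<in>g ` J. \<bar>cross v w\<bar> \<le> 1"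
    "\<forall>u\<in>g ` J. \<forall>v\<in>g ` J. \<forall>w\<in>g ` J. \<bar>p * of_int (double_area u v w)\<bar> \<le> 1"
    "\<forall>v\<in>g ` J. \<forall>w\<in>g ` J. \<bar>p * of_int (fst v - fst w)\<bar> \<le> 1 \<and> \<bar>p * of_int (snd v - snd w)\<bar> \<le> 1"
    using cross area diff by blast+
  note bounds = card_lattice_layer_le[OF J(3) this]
  show "card J \<le> 7" "1/2 \<le> \<bar>p\<bar> \<Longrightarrow> card J \<le> 6" "1/2 < \<bar>p\<bar> \<Longrightarrow> card J \<le> 4"
    using bounds by (simp_all add: card_image[OF J(2)])
qed

section \<open>Upper bounds\<close>

lemma shift_mat_dims [simp]:
  "dim_row (shift_mat t A) = dim_row A" "dim_col (shift_mat t A) = dim_col A"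
  by (simp_all add: shift_mat_def)

lemma shift_mat_index [simp]:
  "i < dim_row A \<Longrightarrow> j < dim_col A \<Longrightarrow> shift_mat t A $$ (i, j) = t $ i + of_int (A $$ (i, j))"
  by (simp add: shift_mat_def)

lemma shifted_entry_nonpos:
  assumes "totally_1_submodular (shift_mat t A)" "i < dim_row A" "j < dim_col A" "0 < t $ i"
  shows "A $$ (i, j) \<le> 0"
proof -
  have "\<bar>minor (shift_mat t A) [i] [j]\<bar> \<le> 1"
    using totally_1_submodular_minor_le[OF assms(1), of "[i]" "[j]"] assms(2,3) by simp
  then have "\<bar>t $ i + of_int (A $$ (i, j))\<bar> \<le> 1"
    using assms(2,3) by (simp add: minor_1)
  then show ?thesis
    using assms(4) by linarith
qed

lemma card_distinct_columns_le_prod: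
  assumes A: "A \<in> carrier_mat m n"
    and entries: "\<And>i j. i < m \<Longrightarrow> j < n \<Longrightarrow> A $$ (i, j) \<in> X i"
    and fin: "\<And>i. i < m \<Longrightarrow> finite (X i)"
    and distinct: "\<forall>j<n. \<forall>j'<n. j \<noteq> j' \<longrightarrow> col A j \<noteq> col A j'"
  shows "n \<le> (\<Prod>i<m. card (X i))"
proof -
  define f where "f j = restrict (\<lambda>i. A $$ (i, j)) {..<m}" for j
  have "inj_on f {..<n}"
  proof (rule inj_onI)
    fix j j'
    assume "j \<in> {..<n}" "j' \<in> {..<n}" "f j = f j'"
    have "A $$ (i, j) = A $$ (i, j')" if "i < m" for i
      using fun_cong[OF \<open>f j = f j'\<close>, of i] that by (simp add: f_def)
    then have "col A j = col A j'"
      using A \<open>j \<in> {..<n}\<close> \<open>j' \<in> {..<n}\<close> by (intro eq_vecI) auto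
    then show "j = j'"
      using distinct \<open>j \<in> {..<n}\<close> \<open>j' \<in> {..<n}\<close> by blast
  qed
  moreover have "f j \<in> PiE {..<m} X" if "j < n" for j
    unfolding f_def restrict_PiE_iff using entries that by blast
  then have "f ` {..<n} \<subseteq> PiE {..<m} X"
    by blast
  ultimately have "card {..<n} \<le> card (PiE {..<m} X)"
    using fin by (intro card_inj_on_le) (auto intro: finite_PiE)
  then show ?thesis
    by (simp add: card_PiE)
qed

lemma card_columns_le_prod_shift:
  assumes A: "A \<in> carrier_mat m n" "\<forall>i<m. \<forall>j<n. A $$ (i, j) \<in> {-1, 0, 1}"
    "\<forall>j<n. \<forall>j'<n. j \<noteq> j' \<longrightarrow> col A j \<noteq> col A j'"
    and T: "totally_1_submodular (shift_mat t A)"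
  shows "n \<le> (\<Prod>i<m. if 0 < t $ i then 2 else 3)"
proof -
  define X where "X i = (if 0 < t $ i then {-1, 0} else {-1, 0, 1 :: int})" for i
  have "A $$ (i, j) \<in> X i" if "i < m" "j < n" for i j
  proof -
    have "A $$ (i, j) \<in> {-1, 0, 1}"
      using A(2) that by blast
    then show ?thesis
      using A(1) shifted_entry_nonpos[OF T, of i j] that by (auto simp: X_def)
  qed
  then have "n \<le> (\<Prod>i<m. card (X i))"
    using A by (intro card_distinct_columns_le_prod) (auto simp: X_def)
  also have "\<dots> = (\<Prod>i<m. if 0 < t $ i then 2 else 3)"
    by (intro prod.cong) (simp_all add: X_def)
  finally show ?thesis .
qed

lemma exists_positive_component:
  fixes t :: "real vec"
  assumes "t \<in> carrier_vec m" "\<forall>i<m. 0 \<le> t $ i" "t \<noteq> 0\<^sub>v m"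
  shows "\<exists>i<m. 0 < t $ i"
proof (rule ccontr)
  assume "\<not> (\<exists>i<m. 0 < t $ i)"
  then have "t = 0\<^sub>v m"
    using assms(1,2) by (intro eq_vecI) force+
  then show False
    using assms(3) by simp
qed

lemma card_shifted_layer_le:
  fixes t :: "real vec" and A :: "int mat" and a :: int
  assumes A: "A \<in> carrier_mat 3 n" "\<forall>i<3. \<forall>j<n. A $$ (i, j) \<in> {-1, 0, 1}"
    "\<forall>j<n. \<forall>j'<n. j \<noteq> j' \<longrightarrow> col A j \<noteq> col A j'"
    and T: "totally_1_submodular (shift_mat t A)"
    and rows: "distinct [r, i, i']" "{r, i, i'} \<subseteq> {..<3}"
    and t: "t $ i = 0" "t $ i' = 0"
  defines "layer \<equiv> {j. j < n \<and> A $$ (r, j) = a}"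
  shows "card layer \<le> 7" and "1/2 \<le> \<bar>t $ r + a\<bar> \<Longrightarrow> card layer \<le> 6"
    and "1/2 < \<bar>t $ r + a\<bar> \<Longrightarrow> card layer \<le> 4"
proof -
  define g where "g j = (A $$ (i, j), A $$ (i', j))" for j
  have "inj_on g layer"
  proof (rule inj_onI)
    fix j k
    assume jk: "j \<in> layer" "k \<in> layer" "g j = g k"
    have "A $$ (l, j) = A $$ (l, k)" if "l < 3" for l
    proof -
      have "l = r \<or> l = i \<or> l = i'"
        using that rows by auto
      then show ?thesis
        using jk by (auto simp: layer_def g_def)
    qed
    then have "col A j = col A k"
      using A(1) jk by (intro eq_vecI) (auto simp: layer_def)
    then show "j = k"
      using A(3) jk by (auto simp: layer_def)
  qed
  moreover have "g ` layer \<subseteq> {-1, 0, 1} \<times> {-1, 0, 1}"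
    using A(2) rows by (auto simp: layer_def g_def)
  moreover have "layer \<subseteq> {..<dim_col (shift_mat t A)}"
    using A(1) by (auto simp: layer_def)
  ultimately show "card layer \<le> 7" "1/2 \<le> \<bar>t $ r + a\<bar> \<Longrightarrow> card layer \<le> 6"
    "1/2 < \<bar>t $ r + a\<bar> \<Longrightarrow> card layer \<le> 4"
    using card_layer_le[OF T, of r i i' layer g "t $ r + of_int a"] rows A(1) t
    by (auto simp: layer_def g_def)
qed

lemma card_columns_le_12_if_one_shifted_row:
  fixes t :: "real vec" and A :: "int mat"
  assumes A: "A \<in> carrier_mat 3 n" "\<forall>i<3. \<forall>j<n. A $$ (i, j) \<in> {-1, 0, 1}"
    "\<forall>j<n. \<forall>j'<n. j \<noteq> j' \<longrightarrow> col A j \<noteq> col A j'"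
    and T: "totally_1_submodular (shift_mat t A)"
    and rows: "distinct [r, i, i']" "{r, i, i'} \<subseteq> {..<3}"
    and t: "0 < t $ r" "t $ r < 1" "t $ i = 0" "t $ i' = 0"
  shows "n \<le> 12"
proof -
  let ?layer = "\<lambda>a. {j. j < n \<and> A $$ (r, j) = a}"
  have "{..<n} = ?layer 0 \<union> ?layer (-1)"
    using A rows shifted_entry_nonpos[OF T, of r] t(1) by fastforce
  moreover have "?layer 0 \<inter> ?layer (-1) = {}"
    by auto
  ultimately have n: "n = card (?layer 0) + card (?layer (-1))"
    by (metis card_Un_disjoint card_lessThan finite_Un finite_lessThan)
  note layer_bounds = card_shifted_layer_le[OF A T rows t(3,4)]
  consider "t $ r = 1/2" | "1/2 < \<bar>t $ r + of_int 0\<bar>" | "1/2 < \<bar>t $ r + of_int (-1)\<bar>"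
    using t(1,2) by fastforce
  then show ?thesis
    using layer_bounds[where a = 0] layer_bounds[where a = "-1"] n by cases fastforce+
qed

lemma shifted_admissible_2_le_6:
  assumes "shifted_admissible 2 n"
  shows "n \<le> 6"
proof -
  obtain t A where t: "t \<in> carrier_vec 2" "\<forall>i<2. 0 \<le> t $ i \<and> t $ i < 1" "t \<noteq> 0\<^sub>v 2"
    and A: "A \<in> carrier_mat 2 n" "\<forall>i<2. \<forall>j<n. A $$ (i, j) \<in> {-1, 0, 1}"
      "\<forall>j<n. \<forall>j'<n. j \<noteq> j' \<longrightarrow> col A j \<noteq> col A j'"
    and T: "totally_1_submodular (shift_mat t A)"
    using assms unfolding shifted_admissible_def by blast
  have "\<exists>i<2. 0 < t $ i"
    using exists_positive_component t by auto
  then have "(\<Prod>i<2. if 0 < t $ i then 2 else 3 :: nat) \<le> 6"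
    by (auto simp: numeral_2_eq_2 less_Suc_eq)
  then show ?thesis
    using card_columns_le_prod_shift[OF A T] by simp
qed

lemma shifted_admissible_3_le_12:
  assumes "shifted_admissible 3 n"
  shows "n \<le> 12"
proof -
  obtain t A where t: "t \<in> carrier_vec 3" "\<forall>i<3. 0 \<le> t $ i \<and> t $ i < 1" "t \<noteq> 0\<^sub>v 3"
    and A: "A \<in> carrier_mat 3 n" "\<forall>i<3. \<forall>j<n. A $$ (i, j) \<in> {-1, 0, 1}"
      "\<forall>j<n. \<forall>j'<n. j \<noteq> j' \<longrightarrow> col A j \<noteq> col A j'"
    and T: "totally_1_submodular (shift_mat t A)"
    using assms unfolding shifted_admissible_def by blast
  have "\<exists>r<3. 0 < t $ r"
    using exists_positive_component t by auto
  then obtain r where r: "r < 3" "0 < t $ r"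
    by blast
  show ?thesis
  proof (cases "\<exists>k<3. k \<noteq> r \<and> 0 < t $ k")
    case True
    then have "(\<Prod>i<3. if 0 < t $ i then 2 else 3 :: nat) \<le> 12"
      using r by (auto simp: numeral_3_eq_3 less_Suc_eq)
    then show ?thesis
      using card_columns_le_prod_shift[OF A T] by simp
  next
    case False
    then have zero: "t $ k = 0" if "k < 3" "k \<noteq> r" for k
      using t(2) that by force
    obtain i i' where rows: "distinct [r, i, i']" "{r, i, i'} \<subseteq> {..<3}"
    proof -
      have "r = 0 \<or> r = 1 \<or> r = 2"
        using r(1) by auto
      then show ?thesis
        using that[of 1 2] that[of 0 2] that[of 0 1] by auto
    qed
    then show ?thesis
      using card_columns_le_12_if_one_shifted_row[OF A T rows r(2)] r t(2) zero by simp
  qed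
qed

section \<open>Extremal matrices\<close>

lemma totally_1_submodular_3_rowsI:
  assumes rows: "dim_row M \<le> 3"
    and minors1: "\<And>i j. i < dim_row M \<Longrightarrow> j < dim_col M \<Longrightarrow> \<bar>M $$ (i, j)\<bar> \<le> 1"
    and minors2: "\<And>i1 i2 j1 j2. i1 < i2 \<Longrightarrow> i2 < dim_row M \<Longrightarrow> j1 < j2 \<Longrightarrow> j2 < dim_col M \<Longrightarrow>
      \<bar>minor M [i1, i2] [j1, j2]\<bar> \<le> 1"
    and minors3: "\<And>i1 i2 i3 j1 j2 j3. i1 < i2 \<Longrightarrow> i2 < i3 \<Longrightarrow> i3 < dim_row M \<Longrightarrow>
      j1 < j2 \<Longrightarrow> j2 < j3 \<Longrightarrow> j3 < dim_col M \<Longrightarrow> \<bar>minor M [i1, i2, i3] [j1, j2, j3]\<bar> \<le> 1"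
  shows "totally_1_submodular M"
  unfolding totally_1_submodular_iff_minors
proof (intro allI impI)
  fix rs cs :: "nat list"
  assume rs: "sorted_wrt (<) rs" "set rs \<subseteq> {..<dim_row M}"
    and cs: "sorted_wrt (<) cs" "set cs \<subseteq> {..<dim_col M}"
    and len: "length rs = length cs"
  have "length rs \<le> 3"
    using card_mono[OF finite_lessThan rs(2)] rows rs(1) by (simp add: strict_sorted_iff distinct_card)
  then consider "length rs = 0" | "length rs = 1" | "length rs = 2" | "length rs = 3"
    by linarith
  then show "\<bar>minor M rs cs\<bar> \<le> 1"
  proof cases
    case 1
    then show ?thesis
      using len by (simp add: minor_def)
  next
    case 2
    then obtain i j where "rs = [i]" "cs = [j]"
      using len by (auto simp: length_Suc_conv)
    then show ?thesis
      using rs cs minors1 by (simp add: minor_1)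
  next
    case 3
    then obtain i1 i2 j1 j2 where "rs = [i1, i2]" "cs = [j1, j2]"
      using len by (auto simp: length_Suc_conv numeral_2_eq_2)
    then show ?thesis
      using rs cs minors2 by simp
  next
    case 4
    then obtain i1 i2 i3 j1 j2 j3 where "rs = [i1, i2, i3]" "cs = [j1, j2, j3]"
      using len by (auto simp: length_Suc_conv numeral_3_eq_3)
    then show ?thesis
      using rs cs minors3 by simp
  qed
qed

text \<open>The bounds \<open>2\<close>, \<open>4\<close>, \<open>8\<close> on the \<open>k \<times> k\<close> minors of \<open>H\<close> make those of \<open>H / 2\<close> at most \<open>1\<close>;
  the determinants are written out so that the condition can be evaluated for a concrete \<open>H\<close>.\<close>
definition minors_le_pow2 :: "nat \<Rightarrow> nat \<Rightarrow> (nat \<Rightarrow> nat \<Rightarrow> int) \<Rightarrow> bool" where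
  "minors_le_pow2 m n H \<longleftrightarrow>
     (\<forall>i<m. \<forall>j<n. \<bar>H i j\<bar> \<le> 2) \<and>
     (\<forall>i2<m. \<forall>i1<i2. \<forall>j2<n. \<forall>j1<j2. \<bar>H i1 j1 * H i2 j2 - H i1 j2 * H i2 j1\<bar> \<le> 4) \<and>
     (\<forall>i3<m. \<forall>i2<i3. \<forall>i1<i2. \<forall>j3<n. \<forall>j2<j3. \<forall>j1<j2.
        \<bar>H i1 j1 * (H i2 j2 * H i3 j3 - H i2 j3 * H i3 j2)
         - H i2 j1 * (H i1 j2 * H i3 j3 - H i1 j3 * H i3 j2)
         + H i3 j1 * (H i1 j2 * H i2 j3 - H i1 j3 * H i2 j2)\<bar> \<le> 8)"

lemma totally_1_submodular_half_integral:
  assumes dims: "dim_row M = m" "dim_col M = n" "m \<le> 3"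
    and entries: "\<And>i j. i < m \<Longrightarrow> j < n \<Longrightarrow> M $$ (i, j) = of_int (H i j) / 2"
    and bounds: "minors_le_pow2 m n H"
  shows "totally_1_submodular M"
proof (rule totally_1_submodular_3_rowsI)
  note bound1 = bounds[unfolded minors_le_pow2_def, THEN conjunct1, rule_format]
    and bound2 = bounds[unfolded minors_le_pow2_def, THEN conjunct2, THEN conjunct1, rule_format]
    and bound3 = bounds[unfolded minors_le_pow2_def, THEN conjunct2, THEN conjunct2, rule_format]
  show "dim_row M \<le> 3"
    using dims by simp
  show "\<bar>M $$ (i, j)\<bar> \<le> 1" if "i < dim_row M" "j < dim_col M" for i j
  proof -
    have "\<bar>H i j\<bar> \<le> 2"
      using bound1 that dims by simp
    then show ?thesis
      using that dims by (simp add: entries abs_divide flip: of_int_abs)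
  qed
  show "\<bar>minor M [i1, i2] [j1, j2]\<bar> \<le> 1"
    if "i1 < i2" "i2 < dim_row M" "j1 < j2" "j2 < dim_col M" for i1 i2 j1 j2
  proof -
    define E where "E = H i1 j1 * H i2 j2 - H i1 j2 * H i2 j1"
    have "minor M [i1, i2] [j1, j2] = of_int E / 4"
      unfolding E_def using that dims by (simp add: minor_2 entries field_simps)
    moreover have "\<bar>E\<bar> \<le> 4"
      unfolding E_def by (rule bound2) (use that dims in auto)
    ultimately show ?thesis
      by (simp add: abs_divide flip: of_int_abs)
  qed
  show "\<bar>minor M [i1, i2, i3] [j1, j2, j3]\<bar> \<le> 1"
    if "i1 < i2" "i2 < i3" "i3 < dim_row M" "j1 < j2" "j2 < j3" "j3 < dim_col M" for i1 i2 i3 j1 j2 j3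
  proof -
    define E where "E = H i1 j1 * (H i2 j2 * H i3 j3 - H i2 j3 * H i3 j2)
      - H i2 j1 * (H i1 j2 * H i3 j3 - H i1 j3 * H i3 j2)
      + H i3 j1 * (H i1 j2 * H i2 j3 - H i1 j3 * H i2 j2)"
    have "minor M [i1, i2, i3] [j1, j2, j3] = of_int E / 8"
      unfolding E_def using that dims by (simp add: minor_3 entries field_simps)
    moreover have "\<bar>E\<bar> \<le> 8"
      unfolding E_def by (rule bound3) (use that dims in auto)
    ultimately show ?thesis
      by (simp add: abs_divide flip: of_int_abs)
  qed
qed

lemma shifted_admissible_half_integralI:
  fixes \<tau> :: "nat \<Rightarrow> int" and G :: "nat \<Rightarrow> nat \<Rightarrow> int"
  assumes "m \<le> 3" and \<tau>: "\<forall>i<m. \<tau> i \<in> {0, 1}" "\<exists>i<m. \<tau> i = 1"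
    and G: "\<forall>i<m. \<forall>j<n. G i j \<in> {-1, 0, 1}" "\<forall>j'<n. \<forall>j<j'. \<exists>i<m. G i j \<noteq> G i j'"
    and "minors_le_pow2 m n (\<lambda>i j. \<tau> i + 2 * G i j)"
  shows "shifted_admissible m n"
proof -
  define t :: "real vec" where "t = vec m (\<lambda>i. of_int (\<tau> i) / 2)"
  define A :: "int mat" where "A = mat m n (\<lambda>(i, j). G i j)"
  have t_nonzero: "t \<noteq> 0\<^sub>v m"
  proof -
    obtain i where "i < m" "\<tau> i = 1"
      using \<tau>(2) by blast
    then have "t $ i \<noteq> 0\<^sub>v m $ i"
      by (simp add: t_def)
    then show ?thesis
      by metis
  qed
  have A_cols: "col A j \<noteq> col A j'" if jj': "j < n" "j' < n" "j \<noteq> j'" for j j'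
  proof -
    have "\<exists>i<m. G i j \<noteq> G i j'"
      using G(2) jj' by (metis linorder_neqE_nat)
    then obtain i where "i < m" "G i j \<noteq> G i j'"
      by blast
    then have "col A j $ i \<noteq> col A j' $ i"
      using jj' by (simp add: A_def)
    then show ?thesis
      by metis
  qed
  have "totally_1_submodular (shift_mat t A)"
    by (rule totally_1_submodular_half_integral[where H = "\<lambda>i j. \<tau> i + 2 * G i j"])
      (use assms in \<open>auto simp: A_def t_def\<close>)
  then show ?thesis
    unfolding shifted_admissible_def using \<tau>(1) G(1) t_nonzero A_cols
    by (intro exI[of _ t] exI[of _ A]) (auto simp: t_def A_def)
qed

lemma all_less_iff_list_all_upt: "(\<forall>i<n. P i) \<longleftrightarrow> list_all P [0..<n]"
  by (auto simp: list_all_iff)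

lemma ex_less_iff_list_ex_upt: "(\<exists>i<n. P i) \<longleftrightarrow> list_ex P [0..<n]"
  by (auto simp: list_ex_iff)

lemma shifted_admissible_2_6: "shifted_admissible 2 6"
  by (rule shifted_admissible_half_integralI[where \<tau> = "\<lambda>i. [1, 0] ! i"
        and G = "\<lambda>i j. [[-1, -1, -1, 0, 0, 0], [-1, 0, 1, -1, 0, 1]] ! i ! j"])
    (simp_all only: minors_le_pow2_def all_less_iff_list_all_upt ex_less_iff_list_ex_upt, code_simp+)

lemma shifted_admissible_3_12: "shifted_admissible 3 12"
  by (rule shifted_admissible_half_integralI[where \<tau> = "\<lambda>i. [1, 1, 0] ! i"
        and G = "\<lambda>i j. [[-1, -1, -1, -1, -1, -1, 0, 0, 0, 0, 0, 0],
                         [-1, -1, -1, 0, 0, 0, -1, -1, -1, 0, 0, 0],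
                         [-1, 0, 1, -1, 0, 1, -1, 0, 1, -1, 0, 1]] ! i ! j"])
    (simp_all only: minors_le_pow2_def all_less_iff_list_all_upt ex_less_iff_list_ex_upt, code_simp+)

theorem proposition2p5:
  shows "shifted_heller 2 = 6 \<and> shifted_heller 3 = 12"
  unfolding shifted_heller_def
  using Greatest_equality[of "shifted_admissible 2" 6, OF shifted_admissible_2_6 shifted_admissible_2_le_6]
    Greatest_equality[of "shifted_admissible 3" 12, OF shifted_admissible_3_12 shifted_admissible_3_le_12]
  by blast

end
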